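(* Assume the setting and algorithm described in the context, and that $F$ satisfies the Polyak–Łojasiewicz condition with constant $\mu>0$. If $0<\alpha\le\frac1{2L}$, then for all $k\ge0$, almost surely, $$\mathbb E\big[F(\bar x^{k+1})-F^*\,|\,\mathcal F^k\big]\le(1-\mu\alpha)\big(F(\bar x^k)-F^*\big)+\frac{\alpha L^2}{n}\|x^k-Jx^k\|^2+\frac{\alpha^2L^3}{n}t^k .$$
   Context: Setting. Let $n,m,p\ge1$ be integers and $\mathcal V=\{1,\dots,n\}$. For each $i\in\mathcal V$ and $j\in\{1,\dots,m\}$, $f_{i,j}:\mathbb R^p\to\mathbb R$ is differentiable and $L$-smooth for some $L>0$, i.e. $\|\nabla f_{i,j}(x)-\nabla f_{i,j}(y)\|\le L\|x-y\|$ for all $x,y\in\mathbb R^p$. Let $f_i:=\frac1m\sum_{j=1}^m f_{i,j}$ and $F:=\frac1n\sum_{i=1}^n f_i$, and assume $F^*:=\inf_{x\in\mathbb R^p}F(x)>-\infty$. Let $\underline W=(\underline w_{ir})\in\mathbb R^{n\times n}$ be a nonnegative, primitive, doubly stochastic matrix ($\underline W\mathbf 1_n=\mathbf 1_n$, $\mathbf 1_n^\top\underline W=\mathbf 1_n^\top$), and let $\lambda\in[0,1)$ be its second largest singular value. Any expression with $\lambda$ in a denominator is read as $+\infty$ when $\lambda=0$. Algorithm GT-SAGA with step-size $\alpha>0$: fix a deterministic $\bar x^0\in\mathbb R^p$; for all $i\in\mathcal V$ set $x_i^0=\bar x^0$, $z_{i,j}^0=x_i^0$ for all $j$, $y_i^0=0$,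 $g_i^{-1}=0$. For $k=0,1,2,\dots$ and every $i\in\mathcal V$: draw $\tau_i^k$ uniformly from $\{1,\dots,m\}$; set $g_i^k=\nabla f_{i,\tau_i^k}(x_i^k)-\nabla f_{i,\tau_i^k}(z_{i,\tau_i^k}^k)+\frac1m\sum_{j=1}^m\nabla f_{i,j}(z_{i,j}^k)$; set $y_i^{k+1}=\sum_{r=1}^n\underline w_{ir}(y_r^k+g_r^k-g_r^{k-1})$; set $x_i^{k+1}=\sum_{r=1}^n\underline w_{ir}(x_r^k-\alpha y_r^{k+1})$; draw $s_i^k$ uniformly from $\{1,\dots,m\}$; set $z_{i,j}^{k+1}=x_i^k$ if $j=s_i^k$ and $z_{i,j}^{k+1}=z_{i,j}^k$ otherwise. The family $\{\tau_i^k,s_i^k: i\in\mathcal V,k\ge0\}$ is independent. Notation. $x^k,y^k,g^k\in\mathbb R^{np}$ stack the $x_i^k$, $y_i^k$, $g_i^k$; $\nabla\mathbf f(x^k)\in\mathbb R^{np}$ stacks $\nabla f_i(x_i^k)$, $i=1,\dots,n$; $W=\underline W\otimes I_p$, $J=(\frac1n\mathbf 1_n\mathbf 1_n^\top)\otimes I_p$; $\bar x^k=\frac1n\sum_i x_i^k$, $\bar g^k=\frac1n\sum_i g_i^k$, $\overline{\nabla\mathbf f}(x^k)=\frac1n\sum_i\nabla f_i(x_i^k)$. $\mathcal F^0$ is the trivial $\sigma$-algebra and $\mathcal F^k=\sigma(\{\tau_i^t,s_i^t:i\in\mathcal V,\ t\le k-1\})$ for $k\ge1$. $t^k:=\frac1n\sum_{i=1}^n\frac1m\sum_{j=1}^m\|\bar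 x^k-z_{i,j}^k\|^2$. $\|\nabla\mathbf f(x^0)\|^2:=\sum_{i=1}^n\|\nabla f_i(\bar x^0)\|^2$. Norms are Euclidean (spectral for matrices); vector and matrix inequalities are entrywise. Polyak–Łojasiewicz (PL) condition with constant $\mu>0$: $2\mu(F(x)-F^* )\le\|\nabla F(x)\|^2$ for all $x\in\mathbb R^p$. *)

theory Defs
  imports "HOL-Analysis.Analysis"
begin

(* Square matrices of size n are represented as functions nat => nat => real,
   only the entries with indices < n are meaningful. *)
fun matpow :: "nat \<Rightarrow> (nat \<Rightarrow> nat \<Rightarrow> real) \<Rightarrow> nat \<Rightarrow> nat \<Rightarrow> nat \<Rightarrow> real" where
  "matpow n W 0 = (\<lambda>i j. if i = j then 1 else 0)"
| "matpow n W (Suc k) = (\<lambda>i j. \<Sum>r<n. matpow n W k i r * W r j)"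

definition primitive_mat :: "nat \<Rightarrow> (nat \<Rightarrow> nat \<Rightarrow> real) \<Rightarrow> bool" where
  "primitive_mat n W \<longleftrightarrow> (\<exists>k. \<forall>i<n. \<forall>j<n. matpow n W k i j > 0)"

definition doubly_stochastic :: "nat \<Rightarrow> (nat \<Rightarrow> nat \<Rightarrow> real) \<Rightarrow> bool" where
  "doubly_stochastic n W \<longleftrightarrow>
     (\<forall>i<n. \<forall>j<n. W i j \<ge> 0) \<and>
     (\<forall>i<n. (\<Sum>r<n. W i r) = 1) \<and>
     (\<forall>j<n. (\<Sum>r<n. W r j) = 1)"

(* SAGA gradient estimator at node i; df i j x is the gradient of f_{i,j} at x,
   tau i is the sampled index tau_i^k (0-based, in {..<m}). *)
definition saga_grad ::
  "(nat \<Rightarrow> nat \<Rightarrow> 'a::euclidean_space \<Rightarrow> 'a) \<Rightarrow> nat \<Rightarrow> (nat \<Rightarrow> 'a) \<Rightarrow> (nat \<Rightarrow> nat \<Rightarrow> 'a)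
     \<Rightarrow> (nat \<Rightarrow> nat) \<Rightarrow> nat \<Rightarrow> 'a" where
  "saga_grad df m x z tau i =
     df i (tau i) (x i) - df i (tau i) (z i (tau i)) + (1 / real m) *\<^sub>R (\<Sum>j<m. df i j (z i j))"

(* State of GT-SAGA at iteration k: (x^k, y^k, g^{k-1}, z^k), as a function of the
   history h of random draws: h t i = (tau_i^t, s_i^t). *)
fun gt_saga ::
  "(nat \<Rightarrow> nat \<Rightarrow> real) \<Rightarrow> (nat \<Rightarrow> nat \<Rightarrow> 'a::euclidean_space \<Rightarrow> 'a) \<Rightarrow> nat \<Rightarrow> nat \<Rightarrow> real \<Rightarrow> 'a
     \<Rightarrow> (nat \<Rightarrow> nat \<Rightarrow> nat \<times> nat) \<Rightarrow> nat
     \<Rightarrow> (nat \<Rightarrow> 'a) \<times> (nat \<Rightarrow> 'a) \<times> (nat \<Rightarrow> 'a) \<times> (nat \<Rightarrow> nat \<Rightarrow> 'a)" where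
  "gt_saga W df n m \<alpha> x0 h 0 = ((\<lambda>i. x0), (\<lambda>i. 0), (\<lambda>i. 0), (\<lambda>i j. x0))"
| "gt_saga W df n m \<alpha> x0 h (Suc k) =
     (case gt_saga W df n m \<alpha> x0 h k of (x, y, gp, z) \<Rightarrow>
       let tau = (\<lambda>i. fst (h k i));
           s = (\<lambda>i. snd (h k i));
           g = (\<lambda>i. saga_grad df m x z tau i);
           y' = (\<lambda>i. \<Sum>r<n. W i r *\<^sub>R (y r + g r - gp r));
           x' = (\<lambda>i. \<Sum>r<n. W i r *\<^sub>R (x r - \<alpha> *\<^sub>R y' r));
           z' = (\<lambda>i j. if j = s i then x i else z i j)
       in (x', y', g, z'))"

definition gt_x where "gt_x W df n m \<alpha> x0 h k = fst (gt_saga W df n m \<alpha> x0 h k)"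
definition gt_z where "gt_z W df n m \<alpha> x0 h k = snd (snd (snd (gt_saga W df n m \<alpha> x0 h k)))"

definition avg :: "nat \<Rightarrow> (nat \<Rightarrow> 'a::real_vector) \<Rightarrow> 'a" where
  "avg n x = (1 / real n) *\<^sub>R (\<Sum>i<n. x i)"

end

theory Submission
  imports Defs
begin

(* Averaging the GT-SAGA recursion over the nodes, the column sums of W preserve the mean, and the
   gradient tracking invariant (the mean of y^k is the mean of g^(k-1)) turns the network mean
   into a stochastic gradient step: xbar^(k+1) = xbar^k - alpha * mean_i g_i^k. Conditionally on
   the past, i.e. averaging uniformly over the draws c of step k, the estimators g_i^k are
   independent with means nabla f_i(x_i^k). The descent lemma for the L-smooth F then bounds the
   expected value by a deterministic descent step plus L alpha^2 / (2 n) times the average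
   variance of the g_i^k. Two errors remain: the bias of mean_i nabla f_i(x_i^k) against
   nabla F(xbar^k), controlled by the consensus error ||x^k - J x^k||^2, and the SAGA variance,
   controlled by the consensus error and the staleness t^k of the gradient table. The PL
   inequality turns the remaining -alpha/2 ||nabla F(xbar^k)||^2 into the factor 1 - mu alpha. *)

lemma avg_add: "avg n (\<lambda>i. a i + b i) = avg n a + avg n b"
  by (simp add: avg_def sum.distrib scaleR_right_distrib)

lemma avg_diff: "avg n (\<lambda>i. a i - b i) = avg n a - avg n b"
  by (simp add: avg_def sum_subtractf scaleR_right_diff_distrib)

lemma avg_scaleR: "avg n (\<lambda>i. c *\<^sub>R a i) = c *\<^sub>R avg n a"
  by (simp add: avg_def scaleR_sum_right)

lemma avg_mult_left:
  fixes a :: "nat \<Rightarrow> real"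
  shows "avg n (\<lambda>i. c * a i) = c * avg n a"
  using avg_scaleR[of n c a] by simp

lemma avg_const: "n \<ge> 1 \<Longrightarrow> avg n (\<lambda>i. c) = c"
  by (simp add: avg_def sum_constant_scaleR)

lemma avg_inner_left: "avg n u \<bullet> v = avg n (\<lambda>i. u i \<bullet> v)"
  by (simp add: avg_def inner_sum_left)

lemma avg_mono:
  fixes a b :: "nat \<Rightarrow> real"
  assumes "\<And>i. i < n \<Longrightarrow> a i \<le> b i"
  shows "avg n a \<le> avg n b"
proof -
  have "sum a {..<n} \<le> sum b {..<n}"
    using assms by (intro sum_mono) auto
  then show ?thesis
    by (simp add: avg_def divide_right_mono)
qed

lemma avg_column_stochastic:
  assumes "\<forall>j<n. (\<Sum>r<n. W r j) = 1"
  shows "avg n (\<lambda>i. \<Sum>r<n. W i r *\<^sub>R v r) = avg n v"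
proof -
  have "(\<Sum>i<n. \<Sum>r<n. W i r *\<^sub>R v r) = (\<Sum>r<n. (\<Sum>i<n. W i r) *\<^sub>R v r)"
    by (subst sum.swap) (simp add: scaleR_sum_left)
  then show ?thesis
    using assms by (simp add: avg_def)
qed

lemma avg_norm_sq_deviation:
  fixes u :: "nat \<Rightarrow> 'a::real_inner"
  assumes "n \<ge> 1"
  shows "avg n (\<lambda>i. (norm (u i - avg n u))\<^sup>2) = avg n (\<lambda>i. (norm (u i))\<^sup>2) - (norm (avg n u))\<^sup>2"
proof -
  have "(norm (u i - avg n u))\<^sup>2 = (norm (u i))\<^sup>2 - 2 *\<^sub>R (u i \<bullet> avg n u) + (norm (avg n u))\<^sup>2" for i
    by (simp add: power2_norm_eq_inner inner_diff_left inner_diff_right inner_commute)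
  then have "avg n (\<lambda>i. (norm (u i - avg n u))\<^sup>2)
      = avg n (\<lambda>i. (norm (u i))\<^sup>2) - 2 *\<^sub>R (avg n u \<bullet> avg n u) + (norm (avg n u))\<^sup>2"
    using assms by (simp only: avg_add avg_diff avg_scaleR avg_const avg_inner_left)
  then show ?thesis
    by (simp add: power2_norm_eq_inner)
qed

lemma norm_avg_sq_le:
  fixes u :: "nat \<Rightarrow> 'a::real_inner"
  assumes "n \<ge> 1"
  shows "(norm (avg n u))\<^sup>2 \<le> avg n (\<lambda>i. (norm (u i))\<^sup>2)"
proof -
  have "avg n (\<lambda>_. 0) \<le> avg n (\<lambda>i. (norm (u i - avg n u))\<^sup>2)"
    by (rule avg_mono) simp
  then show ?thesis
    using avg_norm_sq_deviation[OF assms, of u] assms by (simp add: avg_const)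
qed

lemma avg_norm_sq_deviation_le:
  fixes u :: "nat \<Rightarrow> 'a::real_inner"
  assumes "n \<ge> 1"
  shows "avg n (\<lambda>i. (norm (u i - avg n u))\<^sup>2) \<le> avg n (\<lambda>i. (norm (u i))\<^sup>2)"
  using avg_norm_sq_deviation[OF assms, of u] by simp

lemma norm_avg_diff_le:
  assumes "n \<ge> 1" and "\<And>i. i < n \<Longrightarrow> norm (p i - q i) \<le> K"
  shows "norm (avg n p - avg n q) \<le> K"
proof -
  have "norm (avg n p - avg n q) = (1 / real n) * norm (\<Sum>i<n. p i - q i)"
    by (simp add: avg_def sum_subtractf flip: scaleR_diff_right)
  also have "\<dots> \<le> (1 / real n) * (\<Sum>i<n. K)"
    by (intro mult_left_mono order.trans[OF norm_sum sum_mono] assms) auto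
  also have "\<dots> = K"
    using assms(1) by simp
  finally show ?thesis .
qed

lemma norm_diff_sq_le:
  fixes a b c :: "'a::real_normed_vector"
  shows "(norm (a - b))\<^sup>2 \<le> 2 * (norm (a - c))\<^sup>2 + 2 * (norm (c - b))\<^sup>2"
proof -
  have "norm (a - b) \<le> norm (a - c) + norm (c - b)"
    by (rule norm_diff_triangle_le[of a c _ b]) simp_all
  then have "(norm (a - b))\<^sup>2 \<le> (norm (a - c) + norm (c - b))\<^sup>2"
    by (simp add: power_mono)
  also have "\<dots> \<le> 2 * (norm (a - c))\<^sup>2 + 2 * (norm (c - b))\<^sup>2"
    using zero_le_power2[of "norm (a - c) - norm (c - b)"] by (simp add: power2_eq_square algebra_simps)
  finally show ?thesis .
qed

section \<open>Smoothness\<close>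

lemma descent_lemma:
  fixes f :: "'a::real_inner \<Rightarrow> real"
  assumes deriv: "\<And>x. (f has_derivative (\<lambda>v. g x \<bullet> v)) (at x)"
    and lipschitz: "\<And>x y. norm (g x - g y) \<le> L * norm (x - y)"
  shows "f y \<le> f x + g x \<bullet> (y - x) + L / 2 * (norm (y - x))\<^sup>2"
proof -
  define d where "d = y - x"
  define \<phi> where "\<phi> t = f (x + t *\<^sub>R d) - t * (g x \<bullet> d) - L / 2 * t\<^sup>2 * (norm d)\<^sup>2" for t :: real
  have \<phi>_deriv: "DERIV \<phi> t :> g (x + t *\<^sub>R d) \<bullet> d - g x \<bullet> d - L * t * (norm d)\<^sup>2" for t
  proof -
    have "((\<lambda>t. f (x + t *\<^sub>R d)) has_derivative (\<lambda>s. g (x + t *\<^sub>R d) \<bullet> (s *\<^sub>R d))) (at t)"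
      by (rule has_derivative_compose[OF _ deriv, unfolded o_def]) (auto intro!: derivative_eq_intros)
    then have "DERIV (\<lambda>t. f (x + t *\<^sub>R d)) t :> g (x + t *\<^sub>R d) \<bullet> d"
      unfolding has_field_derivative_def by (rule has_derivative_eq_rhs) (simp add: fun_eq_iff)
    then show ?thesis
      unfolding \<phi>_def by (auto intro!: derivative_eq_intros)
  qed
  have "\<phi> 1 \<le> \<phi> 0"
  proof (rule DERIV_nonpos_imp_nonincreasing[of 0 1 \<phi>])
    fix t :: real
    assume t: "0 \<le> t" "t \<le> 1"
    have "(g (x + t *\<^sub>R d) - g x) \<bullet> d \<le> norm (g (x + t *\<^sub>R d) - g x) * norm d"
      by (rule norm_cauchy_schwarz)
    also have "\<dots> \<le> L * t * (norm d)\<^sup>2"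
      using mult_right_mono[OF lipschitz[of "x + t *\<^sub>R d" x] norm_ge_zero[of d]] t
      by (simp add: power2_eq_square mult.assoc)
    finally have "g (x + t *\<^sub>R d) \<bullet> d - g x \<bullet> d - L * t * (norm d)\<^sup>2 \<le> 0"
      by (simp add: inner_diff_left)
    with \<phi>_deriv show "\<exists>y. DERIV \<phi> t :> y \<and> y \<le> 0"
      by blast
  qed simp
  then show ?thesis
    unfolding \<phi>_def d_def by simp
qed

lemma has_derivative_mean_inner:
  assumes "\<And>j. j < m \<Longrightarrow> (f j has_derivative (\<lambda>v. g j \<bullet> v)) (at x)"
  shows "((\<lambda>x. (1 / real m) * (\<Sum>j<m. f j x)) has_derivative (\<lambda>v. avg m g \<bullet> v)) (at x)"
proof -
  have "((\<lambda>x. \<Sum>j<m. f j x) has_derivative (\<lambda>v. \<Sum>j<m. g j \<bullet> v)) (at x)"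
    by (rule has_derivative_sum) (use assms in auto)
  from has_derivative_mult_right[OF this, of "1 / real m"] show ?thesis
    by (rule has_derivative_eq_rhs) (simp add: fun_eq_iff avg_def inner_sum_left sum_distrib_left)
qed

lemma finite_sum_descent:
  fixes f :: "nat \<Rightarrow> nat \<Rightarrow> 'a::real_inner \<Rightarrow> real"
  assumes "n \<ge> 1" and "m \<ge> 1"
    and deriv: "\<And>i j x. i < n \<Longrightarrow> j < m \<Longrightarrow> (f i j has_derivative (\<lambda>v. df i j x \<bullet> v)) (at x)"
    and smooth: "\<And>i j x y. i < n \<Longrightarrow> j < m \<Longrightarrow> norm (df i j x - df i j y) \<le> L * norm (x - y)"
    and F_def: "F = (\<lambda>x. (1 / real n) * (\<Sum>i<n. (1 / real m) * (\<Sum>j<m. f i j x)))"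
  shows "F y \<le> F x + avg n (\<lambda>i. avg m (\<lambda>j. df i j x)) \<bullet> (y - x) + L / 2 * (norm (y - x))\<^sup>2"
proof (rule descent_lemma)
  show "(F has_derivative (\<lambda>v. avg n (\<lambda>i. avg m (\<lambda>j. df i j x)) \<bullet> v)) (at x)" for x
    unfolding F_def by (intro has_derivative_mean_inner deriv)
  show "norm (avg n (\<lambda>i. avg m (\<lambda>j. df i j x)) - avg n (\<lambda>i. avg m (\<lambda>j. df i j y))) \<le> L * norm (x - y)"
    for x y
    using assms(1,2) smooth by (intro norm_avg_diff_le) auto
qed

lemma norm_avg_gradients_diff_sq_le:
  fixes df :: "nat \<Rightarrow> nat \<Rightarrow> 'a::real_normed_vector \<Rightarrow> 'b::real_inner"
  assumes "n \<ge> 1" and "m \<ge> 1"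
    and smooth: "\<And>i j x y. i < n \<Longrightarrow> j < m \<Longrightarrow> norm (df i j x - df i j y) \<le> L * norm (x - y)"
  shows "(norm (avg n (\<lambda>i. avg m (\<lambda>j. df i j y)) - avg n (\<lambda>i. avg m (\<lambda>j. df i j (x i)))))\<^sup>2
    \<le> L\<^sup>2 * avg n (\<lambda>i. (norm (x i - y))\<^sup>2)"
proof -
  have "(norm (avg n (\<lambda>i. avg m (\<lambda>j. df i j y)) - avg n (\<lambda>i. avg m (\<lambda>j. df i j (x i)))))\<^sup>2
      \<le> avg n (\<lambda>i. (norm (avg m (\<lambda>j. df i j y) - avg m (\<lambda>j. df i j (x i))))\<^sup>2)"
    using norm_avg_sq_le[OF assms(1), of "\<lambda>i. avg m (\<lambda>j. df i j y) - avg m (\<lambda>j. df i j (x i))"]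
    by (simp only: avg_diff)
  also have "\<dots> \<le> avg n (\<lambda>i. L\<^sup>2 * (norm (x i - y))\<^sup>2)"
  proof (rule avg_mono)
    fix i
    assume "i < n"
    then have "norm (avg m (\<lambda>j. df i j y) - avg m (\<lambda>j. df i j (x i))) \<le> L * norm (x i - y)"
      using smooth by (intro norm_avg_diff_le[OF assms(2)]) (simp add: norm_minus_commute)
    then show "(norm (avg m (\<lambda>j. df i j y) - avg m (\<lambda>j. df i j (x i))))\<^sup>2 \<le> L\<^sup>2 * (norm (x i - y))\<^sup>2"
      by (simp add: power_mono flip: power_mult_distrib)
  qed
  finally show ?thesis
    by (simp only: avg_mult_left)
qed

section \<open>Expected descent under independent sampling\<close>

lemma expected_descent:
  fixes s :: "'c \<Rightarrow> 'a::real_inner"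
  assumes descent: "\<And>y. F y \<le> F x + G \<bullet> (y - x) + L / 2 * (norm (y - x))\<^sup>2"
    and unbiased: "(\<Sum>c\<in>P. s c) = 0"
  shows "(\<Sum>c\<in>P. F (x - \<alpha> *\<^sub>R (b + s c)))
    \<le> real (card P) * (F x - \<alpha> * (G \<bullet> b) + L * \<alpha>\<^sup>2 / 2 * (norm b)\<^sup>2)
      + L * \<alpha>\<^sup>2 / 2 * (\<Sum>c\<in>P. (norm (s c))\<^sup>2)"
proof -
  have "F (x - \<alpha> *\<^sub>R (b + s c))
      \<le> (F x - \<alpha> * (G \<bullet> b) + L * \<alpha>\<^sup>2 / 2 * (norm b)\<^sup>2)
        + (- \<alpha> *\<^sub>R G + (L * \<alpha>\<^sup>2) *\<^sub>R b) \<bullet> s c + L * \<alpha>\<^sup>2 / 2 * (norm (s c))\<^sup>2" for c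
  proof -
    have "F (x - \<alpha> *\<^sub>R (b + s c))
        \<le> F x - \<alpha> * (G \<bullet> (b + s c)) + L / 2 * (norm (\<alpha> *\<^sub>R (b + s c)))\<^sup>2"
      using descent[of "x - \<alpha> *\<^sub>R (b + s c)"] by simp
    also have "(norm (\<alpha> *\<^sub>R (b + s c)))\<^sup>2 = \<alpha>\<^sup>2 * ((norm b)\<^sup>2 + 2 * (b \<bullet> s c) + (norm (s c))\<^sup>2)"
      by (simp add: power_mult_distrib power2_norm_eq_inner inner_add_left inner_add_right inner_commute)
    finally show ?thesis
      by (simp add: algebra_simps)
  qed
  then have "(\<Sum>c\<in>P. F (x - \<alpha> *\<^sub>R (b + s c)))
      \<le> (\<Sum>c\<in>P. (F x - \<alpha> * (G \<bullet> b) + L * \<alpha>\<^sup>2 / 2 * (norm b)\<^sup>2)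
        + (- \<alpha> *\<^sub>R G + (L * \<alpha>\<^sup>2) *\<^sub>R b) \<bullet> s c + L * \<alpha>\<^sup>2 / 2 * (norm (s c))\<^sup>2)"
    by (rule sum_mono)
  also have "\<dots> = real (card P) * (F x - \<alpha> * (G \<bullet> b) + L * \<alpha>\<^sup>2 / 2 * (norm b)\<^sup>2)
      + L * \<alpha>\<^sup>2 / 2 * (\<Sum>c\<in>P. (norm (s c))\<^sup>2)"
    using unbiased by (simp add: sum.distrib sum_distrib_left flip: inner_sum_right)
  finally show ?thesis .
qed

lemma sum_PiE_insert:
  assumes "x \<notin> S"
  shows "sum \<phi> (PiE (insert x S) T) = (\<Sum>y\<in>T x. \<Sum>g\<in>PiE S T. \<phi> (g(x := y)))"
proof -
  have "sum \<phi> (PiE (insert x S) T) = sum (\<phi> \<circ> (\<lambda>(y, g). g(x := y))) (T x \<times> PiE S T)"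
    unfolding PiE_insert_eq by (rule sum.reindex[OF inj_combinator[OF assms]])
  then show ?thesis
    by (simp add: sum.cartesian_product split_beta)
qed

lemma sum_PiE_component_eq_0:
  assumes "i \<in> I" and "sum e A = 0"
  shows "(\<Sum>c\<in>PiE I (\<lambda>_. A). e (c i)) = 0"
proof -
  have I: "I = insert i (I - {i})"
    using assms(1) by auto
  have "(\<Sum>c\<in>PiE I (\<lambda>_. A). e (c i)) = (\<Sum>y\<in>A. \<Sum>g\<in>PiE (I - {i}) (\<lambda>_. A). e y)"
    by (subst I, subst sum_PiE_insert) auto
  also have "\<dots> = (\<Sum>g\<in>PiE (I - {i}) (\<lambda>_. A). \<Sum>y\<in>A. e y)"
    by (rule sum.swap)
  finally show ?thesis
    using assms(2) by simp
qed

text \<open>The cross terms vanish since the components of a uniformly drawn \<open>c\<close> are independent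
  and each \<open>e i\<close> is centred.\<close>

lemma sum_PiE_norm_sum_sq:
  fixes e :: "'i \<Rightarrow> 'b \<Rightarrow> 'a::real_inner"
  assumes "finite I" and "finite A" and "\<And>i. i \<in> I \<Longrightarrow> sum (e i) A = 0"
  shows "real (card A) * (\<Sum>c\<in>PiE I (\<lambda>_. A). (norm (\<Sum>i\<in>I. e i (c i)))\<^sup>2)
       = real (card A) ^ card I * (\<Sum>i\<in>I. \<Sum>a\<in>A. (norm (e i a))\<^sup>2)"
  using assms(1,3)
proof (induction I rule: finite_induct)
  case empty
  then show ?case by simp
next
  case (insert x I)
  let ?S = "\<lambda>g. \<Sum>i\<in>I. e i (g i)"
  let ?P = "PiE I (\<lambda>_. A)"
  have card_P: "card ?P = card A ^ card I"
    using insert(1) by (simp add: card_PiE)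
  have "(\<Sum>c\<in>PiE (insert x I) (\<lambda>_. A). (norm (\<Sum>i\<in>insert x I. e i (c i)))\<^sup>2)
      = (\<Sum>y\<in>A. \<Sum>g\<in>?P. (norm (e x y + ?S g))\<^sup>2)"
  proof -
    have "(\<Sum>i\<in>insert x I. e i ((g(x := y)) i)) = e x y + ?S g" for g y
      using insert(1,2) by (simp, intro sum.cong) auto
    then show ?thesis
      by (simp add: sum_PiE_insert[OF insert(2)])
  qed
  also have "\<dots> = (\<Sum>y\<in>A. \<Sum>g\<in>?P. (norm (e x y))\<^sup>2 + 2 * (e x y \<bullet> ?S g) + (norm (?S g))\<^sup>2)"
    by (intro sum.cong refl) (simp add: power2_norm_eq_inner inner_add_left inner_add_right inner_commute)
  also have "\<dots> = (\<Sum>y\<in>A. \<Sum>g\<in>?P. (norm (e x y))\<^sup>2) + 2 * ((\<Sum>y\<in>A. e x y) \<bullet> (\<Sum>g\<in>?P. ?S g))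
      + (\<Sum>y\<in>A. \<Sum>g\<in>?P. (norm (?S g))\<^sup>2)"
  proof -
    have "(\<Sum>y\<in>A. \<Sum>g\<in>?P. 2 * (u y \<bullet> v g)) = 2 * ((\<Sum>y\<in>A. u y) \<bullet> (\<Sum>g\<in>?P. v g))"
      for u v :: "_ \<Rightarrow> 'a"
      by (simp add: inner_sum_left inner_sum_right sum_distrib_left) (rule sum.swap)
    then show ?thesis
      by (simp only: sum.distrib)
  qed
  also have "\<dots> = real (card A ^ card I) * (\<Sum>y\<in>A. (norm (e x y))\<^sup>2)
      + real (card A) * (\<Sum>g\<in>?P. (norm (?S g))\<^sup>2)"
    using insert(4)[of x] card_P by (simp add: sum_distrib_left mult.commute)
  finally show ?case
    using insert by (simp add: algebra_simps)
qed

lemma sum_PiE_avg_eq_0: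
  assumes "\<And>i. i < n \<Longrightarrow> sum (e i) A = 0"
  shows "(\<Sum>c\<in>PiE {..<n} (\<lambda>_. A). avg n (\<lambda>i. e i (c i))) = 0"
proof -
  have "(\<Sum>c\<in>PiE {..<n} (\<lambda>_. A). avg n (\<lambda>i. e i (c i)))
      = (1 / real n) *\<^sub>R (\<Sum>i<n. \<Sum>c\<in>PiE {..<n} (\<lambda>_. A). e i (c i))"
    by (simp add: avg_def scaleR_sum_right flip: sum.swap[of _ "PiE {..<n} (\<lambda>_. A)"])
  then show ?thesis
    using assms by (simp add: sum_PiE_component_eq_0)
qed

lemma sum_PiE_norm_avg_sq:
  fixes e :: "nat \<Rightarrow> 'b \<Rightarrow> 'a::real_inner"
  assumes "finite A" and "A \<noteq> {}" and "\<And>i. i < n \<Longrightarrow> sum (e i) A = 0"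
  shows "(1 / real (card A) ^ n) * (\<Sum>c\<in>PiE {..<n} (\<lambda>_. A). (norm (avg n (\<lambda>i. e i (c i))))\<^sup>2)
    = 1 / real n * avg n (\<lambda>i. (1 / real (card A)) * (\<Sum>a\<in>A. (norm (e i a))\<^sup>2))"
proof -
  define Q where "Q = (\<Sum>i<n. \<Sum>a\<in>A. (norm (e i a))\<^sup>2)"
  define V where "V = (\<Sum>c\<in>PiE {..<n} (\<lambda>_. A). (norm (avg n (\<lambda>i. e i (c i))))\<^sup>2)"
  have card_A: "real (card A) > 0"
    using assms(1,2) by (simp add: card_gt_0_iff)
  have "real (card A) * V
      = real (card A) * ((1 / real n)\<^sup>2 * (\<Sum>c\<in>PiE {..<n} (\<lambda>_. A). (norm (\<Sum>i<n. e i (c i)))\<^sup>2))"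
    by (simp add: V_def avg_def power_divide sum_distrib_left)
  also have "\<dots> = (1 / real n)\<^sup>2 * (real (card A) ^ n * Q)"
    using sum_PiE_norm_sum_sq[of "{..<n}" A e] assms by (simp add: Q_def mult_ac)
  finally have V_eq: "real (card A) * V = (1 / real n)\<^sup>2 * (real (card A) ^ n * Q)" .
  have "(1 / real (card A) ^ n) * V = (1 / real (card A) ^ n) * (1 / real (card A)) * (real (card A) * V)"
    using card_A by simp
  also have "\<dots> = (1 / real n)\<^sup>2 * (1 / real (card A)) * Q"
    unfolding V_eq using card_A by simp
  also have "\<dots> = 1 / real n * avg n (\<lambda>i. (1 / real (card A)) * (\<Sum>a\<in>A. (norm (e i a))\<^sup>2))"
    by (simp add: Q_def avg_def sum_distrib_left power2_eq_square mult.assoc)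
  finally show ?thesis
    unfolding V_def .
qed

lemma expected_descent_sampled_average:
  fixes d :: "nat \<Rightarrow> 'b \<Rightarrow> 'a::real_inner"
  assumes descent: "\<And>y. F y \<le> F x + G \<bullet> (y - x) + L / 2 * (norm (y - x))\<^sup>2"
    and A: "finite A" "A \<noteq> {}"
  defines "mean \<equiv> \<lambda>i. (1 / real (card A)) *\<^sub>R (\<Sum>a\<in>A. d i a)"
  shows "(1 / real (card A) ^ n) * (\<Sum>c\<in>PiE {..<n} (\<lambda>_. A). F (x - \<alpha> *\<^sub>R avg n (\<lambda>i. d i (c i))))
    \<le> F x - \<alpha> * (G \<bullet> avg n mean) + L * \<alpha>\<^sup>2 / 2 * (norm (avg n mean))\<^sup>2
      + L * \<alpha>\<^sup>2 / (2 * real n) * avg n (\<lambda>i. (1 / real (card A)) *\<^sub>R (\<Sum>a\<in>A. (norm (d i a - mean i))\<^sup>2))"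
proof -
  define P where "P = PiE {..<n} (\<lambda>_. A)"
  define e where "e i a = d i a - mean i" for i a
  define K where "K = F x - \<alpha> * (G \<bullet> avg n mean) + L * \<alpha>\<^sup>2 / 2 * (norm (avg n mean))\<^sup>2"
  have card_A: "real (card A) > 0"
    using A by (simp add: card_gt_0_iff)
  have e_centred: "sum (e i) A = 0" for i
    using card_A by (simp add: e_def mean_def sum_subtractf sum_constant_scaleR)
  have "avg n (\<lambda>i. d i (c i)) = avg n mean + avg n (\<lambda>i. e i (c i))" for c
    by (simp add: e_def flip: avg_add)
  then have "(\<Sum>c\<in>P. F (x - \<alpha> *\<^sub>R avg n (\<lambda>i. d i (c i))))
      \<le> real (card P) * K + L * \<alpha>\<^sup>2 / 2 * (\<Sum>c\<in>P. (norm (avg n (\<lambda>i. e i (c i))))\<^sup>2)"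
    unfolding K_def P_def using expected_descent[OF descent sum_PiE_avg_eq_0[OF e_centred]] by simp
  moreover have "card P = card A ^ n"
    by (simp add: P_def card_PiE)
  ultimately have "(1 / real (card A) ^ n) * (\<Sum>c\<in>P. F (x - \<alpha> *\<^sub>R avg n (\<lambda>i. d i (c i))))
      \<le> K + L * \<alpha>\<^sup>2 / 2 * ((1 / real (card A) ^ n) * (\<Sum>c\<in>P. (norm (avg n (\<lambda>i. e i (c i))))\<^sup>2))"
    using card_A by (simp add: field_simps)
  then show ?thesis
    unfolding P_def sum_PiE_norm_avg_sq[OF A e_centred] by (simp add: K_def e_def)
qed

section \<open>One step of GT-SAGA\<close>

lemma gt_saga_cong:
  "(\<forall>t<k. h t = h' t) \<Longrightarrow> gt_saga W df n m \<alpha> x0 h k = gt_saga W df n m \<alpha> x0 h' k"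
  by (induction k) (auto simp: Let_def)

text \<open>The state after \<open>k\<close> rounds is \<open>(x, y, g, z)\<close> with \<open>g\<close> the estimators of round \<open>k - 1\<close>;
  gradient tracking keeps the mean of \<open>y\<close> equal to the mean of \<open>g\<close>.\<close>

lemma gt_saga_tracking:
  assumes "\<forall>j<n. (\<Sum>r<n. W r j) = 1"
  shows "avg n (fst (snd (gt_saga W df n m \<alpha> x0 h k)))
    = avg n (fst (snd (snd (gt_saga W df n m \<alpha> x0 h k))))"
proof (induction k)
  case 0
  then show ?case by (simp add: avg_def)
next
  case (Suc k)
  obtain x y gp z where state: "gt_saga W df n m \<alpha> x0 h k = (x, y, gp, z)"
    by (cases "gt_saga W df n m \<alpha> x0 h k") auto
  with Suc have "avg n y = avg n gp"
    by simp
  then show ?case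
    by (simp add: state Let_def avg_column_stochastic[OF assms] avg_add avg_diff)
qed

lemma avg_gt_x_Suc:
  assumes "\<forall>j<n. (\<Sum>r<n. W r j) = 1"
  shows "avg n (gt_x W df n m \<alpha> x0 h (Suc k))
    = avg n (gt_x W df n m \<alpha> x0 h k) - \<alpha> *\<^sub>R avg n (\<lambda>i. saga_grad df m (gt_x W df n m \<alpha> x0 h k)
        (gt_z W df n m \<alpha> x0 h k) (\<lambda>_. fst (h k i)) i)"
proof -
  obtain x y gp z where state: "gt_saga W df n m \<alpha> x0 h k = (x, y, gp, z)"
    by (cases "gt_saga W df n m \<alpha> x0 h k") auto
  have "avg n y = avg n gp"
    using gt_saga_tracking[OF assms, of df m \<alpha> x0 h k] state by simp
  then show ?thesis
    by (simp add: gt_x_def gt_z_def state Let_def avg_column_stochastic[OF assms]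
        avg_add avg_diff avg_scaleR saga_grad_def)
qed

lemma saga_grad_deviation:
  fixes df :: "nat \<Rightarrow> nat \<Rightarrow> 'a::euclidean_space \<Rightarrow> 'a"
  shows "saga_grad df m x z (\<lambda>_. t) i - avg m (\<lambda>j. df i j (x i))
    = (df i t (x i) - df i t (z i t)) - avg m (\<lambda>j. df i j (x i) - df i j (z i j))"
  by (simp add: saga_grad_def avg_diff) (simp add: avg_def)

lemma avg_saga_grad:
  fixes df :: "nat \<Rightarrow> nat \<Rightarrow> 'a::euclidean_space \<Rightarrow> 'a"
  assumes "m \<ge> 1"
  shows "avg m (\<lambda>t. saga_grad df m x z (\<lambda>_. t) i) = avg m (\<lambda>j. df i j (x i))"
proof -
  have "avg m (\<lambda>t. saga_grad df m x z (\<lambda>_. t) i - avg m (\<lambda>j. df i j (x i))) = 0"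
    using assms by (simp add: saga_grad_deviation avg_diff avg_const)
  then show ?thesis
    using assms by (simp add: avg_diff avg_const)
qed

lemma saga_grad_variance_le:
  assumes "m \<ge> 1"
    and smooth: "\<And>j x y. j < m \<Longrightarrow> norm (df i j x - df i j y) \<le> L * norm (x - y)"
  shows "avg m (\<lambda>t. (norm (saga_grad df m x z (\<lambda>_. t) i - avg m (\<lambda>j. df i j (x i))))\<^sup>2)
    \<le> 2 * L\<^sup>2 * (norm (x i - c))\<^sup>2 + 2 * L\<^sup>2 * avg m (\<lambda>t. (norm (c - z i t))\<^sup>2)"
proof -
  define u where "u = (\<lambda>t. df i t (x i) - df i t (z i t))"
  have "avg m (\<lambda>t. (norm (saga_grad df m x z (\<lambda>_. t) i - avg m (\<lambda>j. df i j (x i))))\<^sup>2)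
      = avg m (\<lambda>t. (norm (u t - avg m u))\<^sup>2)"
    by (simp add: saga_grad_deviation u_def)
  also have "\<dots> \<le> avg m (\<lambda>t. (norm (u t))\<^sup>2)"
    by (rule avg_norm_sq_deviation_le[OF assms(1)])
  also have "\<dots> \<le> avg m (\<lambda>t. 2 * L\<^sup>2 * (norm (x i - c))\<^sup>2 + 2 * L\<^sup>2 * (norm (c - z i t))\<^sup>2)"
  proof (rule avg_mono)
    fix t
    assume "t < m"
    then have "(norm (u t))\<^sup>2 \<le> L\<^sup>2 * (norm (x i - z i t))\<^sup>2"
      using smooth[of t "x i" "z i t"] by (simp add: u_def power_mono flip: power_mult_distrib)
    also have "\<dots> \<le> L\<^sup>2 * (2 * (norm (x i - c))\<^sup>2 + 2 * (norm (c - z i t))\<^sup>2)"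
      by (intro mult_left_mono norm_diff_sq_le) simp
    finally show "(norm (u t))\<^sup>2 \<le> 2 * L\<^sup>2 * (norm (x i - c))\<^sup>2 + 2 * L\<^sup>2 * (norm (c - z i t))\<^sup>2"
      by (simp add: algebra_simps)
  qed
  also have "\<dots> = 2 * L\<^sup>2 * (norm (x i - c))\<^sup>2 + 2 * L\<^sup>2 * avg m (\<lambda>t. (norm (c - z i t))\<^sup>2)"
    using assms(1) by (simp add: avg_add avg_const avg_mult_left)
  finally show ?thesis .
qed

lemma avg_saga_grad_variance_le:
  assumes "m \<ge> 1"
    and smooth: "\<And>i j x y. i < n \<Longrightarrow> j < m \<Longrightarrow> norm (df i j x - df i j y) \<le> L * norm (x - y)"
  shows "avg n (\<lambda>i. avg m (\<lambda>t. (norm (saga_grad df m x z (\<lambda>_. t) i - avg m (\<lambda>j. df i j (x i))))\<^sup>2))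
    \<le> 2 * L\<^sup>2 * avg n (\<lambda>i. (norm (x i - c))\<^sup>2) + 2 * L\<^sup>2 * avg n (\<lambda>i. avg m (\<lambda>j. (norm (c - z i j))\<^sup>2))"
proof -
  have "avg n (\<lambda>i. avg m (\<lambda>t. (norm (saga_grad df m x z (\<lambda>_. t) i - avg m (\<lambda>j. df i j (x i))))\<^sup>2))
      \<le> avg n (\<lambda>i. 2 * L\<^sup>2 * (norm (x i - c))\<^sup>2 + 2 * L\<^sup>2 * avg m (\<lambda>j. (norm (c - z i j))\<^sup>2))"
    using smooth by (intro avg_mono saga_grad_variance_le[OF assms(1)]) auto
  then show ?thesis
    by (simp add: avg_add avg_mult_left)
qed

lemma avg_pairs_fst:
  fixes \<phi> :: "nat \<Rightarrow> 'a::real_vector"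
  assumes "m \<ge> 1"
  shows "(1 / real (card ({..<m} \<times> {..<m}))) *\<^sub>R (\<Sum>a\<in>{..<m} \<times> {..<m}. \<phi> (fst a)) = avg m \<phi>"
proof -
  have "(\<Sum>a\<in>{..<m} \<times> {..<m}. \<phi> (fst a)) = (\<Sum>t<m. \<Sum>s<m. \<phi> t)"
    by (simp add: sum.cartesian_product split_beta)
  also have "\<dots> = real m *\<^sub>R (\<Sum>t<m. \<phi> t)"
    by (simp add: scaleR_sum_right sum_constant_scaleR)
  finally have "(\<Sum>a\<in>{..<m} \<times> {..<m}. \<phi> (fst a)) = real m *\<^sub>R (\<Sum>t<m. \<phi> t)" .
  then show ?thesis
    using assms by (simp add: avg_def card_cartesian_product)
qed

lemma gt_saga_expected_descent:
  fixes F :: "'a::euclidean_space \<Rightarrow> real" and df :: "nat \<Rightarrow> nat \<Rightarrow> 'a \<Rightarrow> 'a"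
    and W :: "nat \<Rightarrow> nat \<Rightarrow> real" and n m k :: nat and \<alpha> :: real and x0 h
  defines "X \<equiv> gt_x W df n m \<alpha> x0 h k" and "Z \<equiv> gt_z W df n m \<alpha> x0 h k"
  defines "gb \<equiv> avg n (\<lambda>i. avg m (\<lambda>j. df i j (X i)))"
  assumes m: "m \<ge> 1" and stochastic: "\<forall>j<n. (\<Sum>r<n. W r j) = 1"
    and descent: "\<And>y. F y \<le> F (avg n X) + G \<bullet> (y - avg n X) + L / 2 * (norm (y - avg n X))\<^sup>2"
  shows "(1 / (real m ^ 2) ^ n) * (\<Sum>c\<in>PiE {..<n} (\<lambda>_. {..<m} \<times> {..<m}).
        F (avg n (gt_x W df n m \<alpha> x0 (h(k := c)) (Suc k))))
    \<le> F (avg n X) - \<alpha> * (G \<bullet> gb) + L * \<alpha>\<^sup>2 / 2 * (norm gb)\<^sup>2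
      + L * \<alpha>\<^sup>2 / (2 * real n) * avg n (\<lambda>i. avg m (\<lambda>t.
          (norm (saga_grad df m X Z (\<lambda>_. t) i - avg m (\<lambda>j. df i j (X i))))\<^sup>2))"
proof -
  define A where "A = {..<m} \<times> {..<m}"
  define d where "d i (a :: nat \<times> nat) = saga_grad df m X Z (\<lambda>_. fst a) i" for i a
  have "(0, 0) \<in> A"
    using m by (simp add: A_def)
  then have A: "finite A" "A \<noteq> {}"
    by (auto simp: A_def)
  have card_A: "real (card A) = real m ^ 2"
    by (simp add: A_def card_cartesian_product power2_eq_square)
  have mean: "(1 / real (card A)) *\<^sub>R (\<Sum>a\<in>A. d i a) = avg m (\<lambda>j. df i j (X i))" for i
    using avg_pairs_fst[OF m, of "\<lambda>t. saga_grad df m X Z (\<lambda>_. t) i"] avg_saga_grad[OF m]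
    by (simp add: A_def d_def)
  have variance: "(1 / real (card A)) *\<^sub>R (\<Sum>a\<in>A. (norm (d i a - avg m (\<lambda>j. df i j (X i))))\<^sup>2)
      = avg m (\<lambda>t. (norm (saga_grad df m X Z (\<lambda>_. t) i - avg m (\<lambda>j. df i j (X i))))\<^sup>2)" for i
    using avg_pairs_fst[OF m, of "\<lambda>t. (norm (saga_grad df m X Z (\<lambda>_. t) i - avg m (\<lambda>j. df i j (X i))))\<^sup>2"]
    by (simp add: A_def d_def)
  have step: "avg n (gt_x W df n m \<alpha> x0 (h(k := c)) (Suc k)) = avg n X - \<alpha> *\<^sub>R avg n (\<lambda>i. d i (c i))" for c
  proof -
    have "gt_saga W df n m \<alpha> x0 (h(k := c)) k = gt_saga W df n m \<alpha> x0 h k"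
      by (rule gt_saga_cong) simp
    then show ?thesis
      unfolding avg_gt_x_Suc[OF stochastic] d_def X_def Z_def
      by (simp add: gt_x_def gt_z_def)
  qed
  show ?thesis
    using expected_descent_sampled_average[OF descent A, of n \<alpha> d]
    unfolding step mean variance card_A[symmetric] unfolding gb_def A_def .
qed

lemma biased_gradient_step_le:
  fixes g b :: "'a::real_inner"
  assumes "0 \<le> \<alpha>" and "L * \<alpha> \<le> 1"
  shows "L * \<alpha>\<^sup>2 / 2 * (norm b)\<^sup>2 - \<alpha> * (g \<bullet> b) \<le> \<alpha> / 2 * (norm (g - b))\<^sup>2 - \<alpha> / 2 * (norm g)\<^sup>2"
proof -
  have "L * \<alpha>\<^sup>2 / 2 * (norm b)\<^sup>2 \<le> \<alpha> / 2 * (norm b)\<^sup>2"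
    using mult_right_mono[OF assms(2), of "\<alpha> * (norm b)\<^sup>2"] assms(1)
    by (simp add: power2_eq_square mult_ac)
  moreover have "\<alpha> / 2 * (norm (g - b))\<^sup>2 = \<alpha> / 2 * (norm g)\<^sup>2 - \<alpha> * (g \<bullet> b) + \<alpha> / 2 * (norm b)\<^sup>2"
    by (simp add: power2_norm_eq_inner inner_commute algebra_simps)
  ultimately show ?thesis
    by linarith
qed

text \<open>In the application \<open>C\<close> is the consensus error, \<open>S\<close> the staleness of the SAGA table,
  \<open>V\<close> the average variance of the node estimators and \<open>g - b\<close> the bias of the averaged local
  gradients.\<close>

lemma PL_step_bound:
  fixes g b :: "'a::real_inner"
  assumes "0 < \<alpha>" and "0 \<le> L" and "L * \<alpha> \<le> 1 / 2" and "n \<ge> 1" and "0 \<le> C"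
    and expected: "E \<le> \<Delta> - \<alpha> * (g \<bullet> b) + L * \<alpha>\<^sup>2 / 2 * (norm b)\<^sup>2 + L * \<alpha>\<^sup>2 / (2 * real n) * V"
    and variance: "V \<le> 2 * L\<^sup>2 * C + 2 * L\<^sup>2 * S"
    and bias: "(norm (g - b))\<^sup>2 \<le> L\<^sup>2 * C"
    and PL: "2 * \<mu> * \<Delta> \<le> (norm g)\<^sup>2"
  shows "E \<le> (1 - \<mu> * \<alpha>) * \<Delta> + \<alpha> * L\<^sup>2 * C + \<alpha>\<^sup>2 * L ^ 3 / real n * S"
proof -
  have step: "L * \<alpha>\<^sup>2 / 2 * (norm b)\<^sup>2 - \<alpha> * (g \<bullet> b) \<le> \<alpha> / 2 * (norm (g - b))\<^sup>2 - \<alpha> / 2 * (norm g)\<^sup>2"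
    using assms(1,3) by (intro biased_gradient_step_le) auto
  have "L * \<alpha> / real n \<le> L * \<alpha> / 1"
    using assms(1,2,4) by (intro divide_left_mono) auto
  then have "L * \<alpha> / real n \<le> 1 / 2"
    using assms(3) by linarith
  then have "L * \<alpha> / real n * (\<alpha> * L\<^sup>2 * C) \<le> 1 / 2 * (\<alpha> * L\<^sup>2 * C)"
    using assms(1,5) by (intro mult_right_mono) auto
  moreover have "L * \<alpha>\<^sup>2 / (2 * real n) * V \<le> L * \<alpha>\<^sup>2 / (2 * real n) * (2 * L\<^sup>2 * C + 2 * L\<^sup>2 * S)"
    using assms(1,2) by (intro mult_left_mono[OF variance]) auto
  moreover have "L * \<alpha>\<^sup>2 / (2 * real n) * (2 * L\<^sup>2 * C + 2 * L\<^sup>2 * S)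
      = L * \<alpha> / real n * (\<alpha> * L\<^sup>2 * C) + \<alpha>\<^sup>2 * L ^ 3 / real n * S"
    using assms(4) by (simp add: field_simps power2_eq_square power3_eq_cube)
  moreover have "\<alpha> / 2 * (norm (g - b))\<^sup>2 \<le> \<alpha> * L\<^sup>2 * C / 2"
    using mult_left_mono[OF bias, of "\<alpha> / 2"] assms(1) by simp
  moreover have "\<alpha> * \<mu> * \<Delta> \<le> \<alpha> / 2 * (norm g)\<^sup>2"
    using mult_left_mono[OF PL, of "\<alpha> / 2"] assms(1) by simp
  moreover have "(1 - \<mu> * \<alpha>) * \<Delta> = \<Delta> - \<alpha> * \<mu> * \<Delta>"
    by (simp add: algebra_simps)
  ultimately show ?thesis
    using expected step by linarith
qed

theorem lemma18:
  fixes n m :: nat and L \<mu> \<alpha> :: real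
    and f :: "nat \<Rightarrow> nat \<Rightarrow> 'a::euclidean_space \<Rightarrow> real"
    and df :: "nat \<Rightarrow> nat \<Rightarrow> 'a \<Rightarrow> 'a"
    and W :: "nat \<Rightarrow> nat \<Rightarrow> real"
    and x0 :: 'a
    and F :: "'a \<Rightarrow> real" and gradF :: "'a \<Rightarrow> 'a" and Fstar :: real
  assumes n: "n \<ge> 1" and m: "m \<ge> 1" and L: "L > 0"
    and deriv: "\<And>i j x. i < n \<Longrightarrow> j < m \<Longrightarrow> (f i j has_derivative (\<lambda>v. df i j x \<bullet> v)) (at x)"
    and smooth: "\<And>i j x y. i < n \<Longrightarrow> j < m \<Longrightarrow> norm (df i j x - df i j y) \<le> L * norm (x - y)"
    and F_def: "F = (\<lambda>x. (1 / real n) * (\<Sum>i<n. (1 / real m) * (\<Sum>j<m. f i j x)))"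
    and gradF_def: "gradF = (\<lambda>x. (1 / real n) *\<^sub>R (\<Sum>i<n. (1 / real m) *\<^sub>R (\<Sum>j<m. df i j x)))"
    and bdd: "bdd_below (range F)"
    and Fstar_def: "Fstar = (INF x. F x)"
    and W_ds: "doubly_stochastic n W"
    and W_prim: "primitive_mat n W"
    and mu: "\<mu> > 0"
    and PL: "\<And>x. 2 * \<mu> * (F x - Fstar) \<le> (norm (gradF x))\<^sup>2"
    and alpha: "0 < \<alpha>" "\<alpha> \<le> 1 / (2 * L)"
    and hist: "\<And>t i. t < k \<Longrightarrow> i < n \<Longrightarrow> h t i \<in> {..<m} \<times> {..<m}"
  shows
    "(1 / (real m ^ 2) ^ n) *
       (\<Sum>c \<in> PiE {..<n} (\<lambda>_. {..<m} \<times> {..<m}).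
          F (avg n (gt_x W df n m \<alpha> x0 (h(k := c)) (Suc k))) - Fstar)
     \<le> (1 - \<mu> * \<alpha>) * (F (avg n (gt_x W df n m \<alpha> x0 h k)) - Fstar)
       + \<alpha> * L\<^sup>2 / real n *
           (\<Sum>i<n. (norm (gt_x W df n m \<alpha> x0 h k i - avg n (gt_x W df n m \<alpha> x0 h k)))\<^sup>2)
       + \<alpha>\<^sup>2 * L ^ 3 / real n *
           ((1 / real n) * (\<Sum>i<n. (1 / real m) * (\<Sum>j<m.
              (norm (avg n (gt_x W df n m \<alpha> x0 h k) - gt_z W df n m \<alpha> x0 h k i j))\<^sup>2)))"
proof -
  \<comment> \<open>Only the column sums of \<open>W\<close> enter; primitivity, \<open>\<mu> > 0\<close>, the value of \<open>Fstar\<close>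
    and the range of the earlier draws are not needed for a single step.\<close>
  define X where "X = gt_x W df n m \<alpha> x0 h k"
  define Z where "Z = gt_z W df n m \<alpha> x0 h k"
  define xb where "xb = avg n X"
  define gb where "gb = avg n (\<lambda>i. avg m (\<lambda>j. df i j (X i)))"
  have stochastic: "\<forall>j<n. (\<Sum>r<n. W r j) = 1"
    using W_ds by (simp add: doubly_stochastic_def)
  have gradF_avg: "gradF x = avg n (\<lambda>i. avg m (\<lambda>j. df i j x))" for x
    by (simp add: gradF_def avg_def)
  have "F y - Fstar \<le> F xb - Fstar + gradF xb \<bullet> (y - xb) + L / 2 * (norm (y - xb))\<^sup>2" for y
    using finite_sum_descent[OF n m deriv smooth F_def, of y xb] by (simp add: gradF_avg)
  from gt_saga_expected_descent[OF m stochastic this[unfolded xb_def X_def]]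
  have expected: "(1 / (real m ^ 2) ^ n) * (\<Sum>c\<in>PiE {..<n} (\<lambda>_. {..<m} \<times> {..<m}).
        F (avg n (gt_x W df n m \<alpha> x0 (h(k := c)) (Suc k))) - Fstar)
      \<le> F xb - Fstar - \<alpha> * (gradF xb \<bullet> gb) + L * \<alpha>\<^sup>2 / 2 * (norm gb)\<^sup>2
        + L * \<alpha>\<^sup>2 / (2 * real n) * avg n (\<lambda>i. avg m (\<lambda>t.
          (norm (saga_grad df m X Z (\<lambda>_. t) i - avg m (\<lambda>j. df i j (X i))))\<^sup>2))"
    by (simp only: X_def Z_def xb_def gb_def)
  have bias: "(norm (gradF xb - gb))\<^sup>2 \<le> L\<^sup>2 * avg n (\<lambda>i. (norm (X i - xb))\<^sup>2)"
    unfolding gradF_avg gb_def by (rule norm_avg_gradients_diff_sq_le[OF n m smooth])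
  have "0 \<le> avg n (\<lambda>i. (norm (X i - xb))\<^sup>2)" and "L * \<alpha> \<le> 1 / 2"
    using alpha L by (simp_all add: avg_def sum_nonneg field_simps)
  from PL_step_bound[OF alpha(1) _ this(2) n this(1) expected
      avg_saga_grad_variance_le[OF m smooth] bias PL[of xb]] L
  show ?thesis
    by (simp add: X_def Z_def xb_def avg_def sum_distrib_left mult_ac)
qed

end
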